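(* Let $\lambda$ and $g$ be as in the context, let $q(-1)=-1$ and let $q(0)$ be the fixed point of $g$ with negative multiplier. Then $g'(q(-1))=\left[g'(q(0))\right]^{2}$.
   Context: There is a unique constant $\lambda=2.5029\ldots$ and a unique infinitely (period-doubling) renormalizable analytic unimodal map $g:[-1,1]\to[-1,1]$ solving $g(x)=-\lambda\, g^{2}(-x/\lambda)$ for $-1\le x\le1$ ($g^2=g\circ g$). Unimodal means: $-1$ is the unique fixed point with positive multiplier, $g(1)=-1$, and $g$ has a unique maximum at an interior nondegenerate critical point $c^{(0)}$. Moreover $g$ is analytic near $[-1,1]$, even, concave on $[-c^{(1)},c^{(1)}]$ where $c^{(1)}=g(c^{(0)})$, satisfies $g(c^{(1)})=-c^{(1)}/\lambda$, $g'(c^{(1)})=-\lambda$, and has negative Schwarzian derivative. *)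

theory Defs
  imports "HOL-Analysis.Analysis"
begin

definition real_analytic_near :: "real set \<Rightarrow> (real \<Rightarrow> real) \<Rightarrow> bool" where
  "real_analytic_near S g \<longleftrightarrow>
     (\<exists>G U. open U \<and> complex_of_real ` S \<subseteq> U \<and> G holomorphic_on U \<and>
        (\<forall>x. complex_of_real x \<in> U \<longrightarrow> G (complex_of_real x) = complex_of_real (g x)))"

definition schwarzian :: "(real \<Rightarrow> real) \<Rightarrow> real \<Rightarrow> real" where
  "schwarzian g x = (deriv ^^ 3) g x / deriv g x
                    - 3 / 2 * ((deriv ^^ 2) g x / deriv g x)^2"

end

theory Submission
  imports Defs "HOL-Complex_Analysis.Cauchy_Integral_Formula"
begin

text \<open>Put x0 = -lambda q(0). The renormalization equation turns the fixed point q(0) into a fixed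
  point x0 with multiplier g'(q(0))^2 > 0, so x0 = -1 as soon as x0 lies in [-1,1], that is as soon
  as 0 < q(0) <= 1/lambda. Positivity comes from concavity: g lies above the diagonal on [-c1,0],
  and a fixed point below -c1 with multiplier less than 1 would produce a second fixed point with
  positive multiplier. For the upper bound, g(-1) = -1 makes {1/lambda, g(1/lambda)} a 2-cycle;
  if it straddled q(0), the derivative of g o g would equal g'(-1) >= 1 at both ends of the cycle
  and 1 somewhere in between, hence have a positive interior minimum, which is impossible for a
  map with negative Schwarzian derivative.\<close>

lemma real_analytic_near_has_higher_derivative:
  assumes "real_analytic_near S g" "x \<in> S"
  shows "((deriv ^^ n) g has_real_derivative (deriv ^^ Suc n) g x) (at x)"
proof -
  obtain G U where U: "open U" "complex_of_real ` S \<subseteq> U" "G holomorphic_on U"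
    and G_real: "\<And>x. complex_of_real x \<in> U \<Longrightarrow> G (complex_of_real x) = complex_of_real (g x)"
    using assms unfolding real_analytic_near_def by blast
  define V where "V = complex_of_real -` U"
  have "open V"
    unfolding V_def by (intro open_vimage U continuous_intros)
  have "x \<in> V"
    using U(2) assms(2) unfolding V_def by auto
  have Re_deriv: "((\<lambda>y. Re ((deriv ^^ n) G (complex_of_real y))) has_real_derivative
      Re ((deriv ^^ Suc n) G (complex_of_real y))) (at y)" if "y \<in> V" for n y
  proof -
    have "((deriv ^^ n) G has_field_derivative deriv ((deriv ^^ n) G) (complex_of_real y))
        (at (complex_of_real y))"
      using that U by (intro holomorphic_derivI[OF holomorphic_higher_deriv]) (auto simp: V_def)
    from has_field_derivative_Re[OF has_vector_derivative_real_field[OF this]]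
    show ?thesis by simp
  qed
  have Re_higher_deriv: "\<forall>y\<in>V. (deriv ^^ n) g y = Re ((deriv ^^ n) G (complex_of_real y))" for n
  proof (induction n)
    case 0
    show ?case using G_real by (simp add: V_def)
  next
    case (Suc n)
    show ?case
    proof
      fix y assume "y \<in> V"
      have "((deriv ^^ n) g has_real_derivative Re ((deriv ^^ Suc n) G (complex_of_real y))) (at y)"
        by (rule has_field_derivative_transform_within_open[OF Re_deriv[OF \<open>y \<in> V\<close>] \<open>open V\<close>
              \<open>y \<in> V\<close>]) (use Suc in auto)
      then show "(deriv ^^ Suc n) g y = Re ((deriv ^^ Suc n) G (complex_of_real y))"
        by (simp add: DERIV_imp_deriv)
    qed
  qed
  have "((deriv ^^ n) g has_real_derivative Re ((deriv ^^ Suc n) G (complex_of_real x))) (at x)"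
    by (rule has_field_derivative_transform_within_open[OF Re_deriv[OF \<open>x \<in> V\<close>] \<open>open V\<close>
          \<open>x \<in> V\<close>]) (use Re_higher_deriv in auto)
  then show ?thesis
    using Re_higher_deriv[of "Suc n"] \<open>x \<in> V\<close> by simp
qed

lemma has_real_derivative_unique_on_Icc:
  fixes f k :: "real \<Rightarrow> real"
  assumes "a < b" "x \<in> {a..b}"
    and f: "(f has_real_derivative D) (at x)" and k: "(k has_real_derivative E) (at x)"
    and eq: "\<And>y. y \<in> {a..b} \<Longrightarrow> f y = k y"
  shows "D = E"
proof -
  have f': "(f has_derivative (*) D) (at x within cbox a b)"
    using f by (simp add: has_field_derivative_def has_derivative_at_withinI)
  have k': "(k has_derivative (*) E) (at x within cbox a b)"
    using k by (simp add: has_field_derivative_def has_derivative_at_withinI)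
  have k'': "(k has_derivative (*) D) (at x within cbox a b)"
    by (rule has_derivative_transform_within[OF f', of 1]) (use assms in auto)
  have "(*) D = (*) E"
    by (rule frechet_derivative_unique_within_closed_interval[OF _ _ k'' k']) (use assms in auto)
  then show ?thesis
    by (metis mult.right_neutral)
qed

lemma DERIV_nonneg_at_right_strict_min:
  fixes h :: "real \<Rightarrow> real"
  assumes "(h has_real_derivative D) (at y)" "y < r" "\<And>x. y < x \<Longrightarrow> x \<le> r \<Longrightarrow> h y < h x"
  shows "0 \<le> D"
proof (rule ccontr)
  assume "\<not> 0 \<le> D"
  then obtain d where "d > 0" and dec: "\<forall>t>0. t < d \<longrightarrow> h (y + t) < h y"
    using DERIV_neg_dec_right[OF assms(1)] by (meson not_le)
  define t where "t = min (d / 2) (r - y)"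
  have "0 < t" "t < d" "y + t \<le> r"
    using \<open>d > 0\<close> assms(2) t_def by linarith+
  then show False
    using dec assms(3)[of "y + t"] by force
qed

text \<open>The zero is the last point of [p, r] where h is nonpositive.\<close>

lemma exists_zero_with_nonneg_deriv:
  fixes h h' :: "real \<Rightarrow> real"
  assumes "p < r" "h p = 0" "h r > 0" "h' p < 0"
    and der: "\<And>x. x \<in> {p..r} \<Longrightarrow> (h has_real_derivative h' x) (at x)"
  obtains z where "p < z" "z < r" "h z = 0" "h' z \<ge> 0"
proof -
  have cont: "continuous_on {p..r} h"
    using der by (meson DERIV_continuous continuous_at_imp_continuous_on)
  define S where "S = {p..r} \<inter> h -` {..0}"
  have "closed S"
    unfolding S_def by (rule continuous_closed_preimage[OF cont]) auto
  have "p \<in> S" "bdd_above S"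
    using assms(1,2) by (auto simp: S_def bdd_above_def)
  define z where "z = Sup S"
  have "z \<in> S"
    unfolding z_def using closed_contains_Sup[OF _ \<open>bdd_above S\<close> \<open>closed S\<close>] \<open>p \<in> S\<close> by auto
  then have z: "h z \<le> 0" "p \<le> z" "z < r"
    using assms(3) by (auto simp: S_def less_le)
  have pos: "h x > 0" if "z < x" "x \<le> r" for x
  proof (rule ccontr)
    assume "\<not> h x > 0"
    then have "x \<in> S"
      using that z by (auto simp: S_def)
    then show False
      using cSup_upper[OF _ \<open>bdd_above S\<close>] that(1) unfolding z_def by fastforce
  qed
  have "h z = 0"
  proof (rule ccontr)
    assume "h z \<noteq> 0"
    then have "h z < 0" using z by auto
    moreover have "continuous_on {z..r} h"
      using cont z by (auto intro: continuous_on_subset)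
    ultimately obtain w where "z \<le> w" "w \<le> r" "h w = 0"
      using IVT'[of h z 0 r] assms(3) z by auto
    then show False
      using pos[of w] \<open>h z < 0\<close> by (cases "w = z") auto
  qed
  have "(h has_real_derivative h' z) (at z)"
    using der z by simp
  then have "0 \<le> h' z"
    by (rule DERIV_nonneg_at_right_strict_min[OF _ z(3)]) (use pos \<open>h z = 0\<close> in auto)
  moreover from this have "p < z"
    using z(2) assms(4) by (cases "p = z") auto
  ultimately show ?thesis
    using that z(3) \<open>h z = 0\<close> by blast
qed

lemma critical_point_neg_second_deriv_decreases_right:
  fixes F F' :: "real \<Rightarrow> real"
  assumes "c < b"
    and F: "\<And>x. x \<in> {c..b} \<Longrightarrow> (F has_real_derivative F' x) (at x)"
    and F': "(F' has_real_derivative F'') (at c)" and "F' c = 0" "F'' < 0"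
  shows "\<exists>y\<in>{c<..b}. F y < F c"
proof -
  obtain d where "d > 0" and F'_neg: "\<And>t. 0 < t \<Longrightarrow> t < d \<Longrightarrow> F' (c + t) < 0"
    using DERIV_neg_dec_right[OF F' \<open>F'' < 0\<close>] \<open>F' c = 0\<close> by auto
  define y where "y = c + min (d / 2) (b - c)"
  have y: "c < y" "y < c + d" "y \<le> b"
    using \<open>d > 0\<close> \<open>c < b\<close> y_def by linarith+
  have "F y < F c"
  proof (rule DERIV_neg_imp_decreasing_open[OF \<open>c < y\<close>])
    fix x assume "c < x" "x < y"
    then show "\<exists>l. (F has_real_derivative l) (at x) \<and> l < 0"
      using F[of x] F'_neg[of "x - c"] y by auto
  next
    show "continuous_on {c..y} F"
      using y by (intro continuous_at_imp_continuous_on ballI DERIV_isCont[OF F]) auto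
  qed
  then show ?thesis
    using y by auto
qed

text \<open>The chain rule for the Schwarzian, S(f o h) = (S f o h) h'^2 + S h, at a point where
  (f o h)'' = 0: the a_i are the derivatives of f at h x, the b_i those of h at x.\<close>

lemma third_deriv_comp_at_critical_point:
  fixes a1 a2 a3 b1 b2 b3 :: real
  assumes "a1 \<noteq> 0" "b1 \<noteq> 0" "a2 * b1^2 + a1 * b2 = 0"
  shows "a3 * b1^3 + 3 * a2 * b1 * b2 + a1 * b3
     = (a1 * b1) * ((a3 / a1 - 3/2 * (a2 / a1)^2) * b1^2 + (b3 / b1 - 3/2 * (b2 / b1)^2))"
proof -
  have b2: "b2 = - a2 * b1^2 / a1"
    using assms by (simp add: field_simps)
  show ?thesis
    using assms(1,2) unfolding b2 by (simp add: field_simps power2_eq_square power3_eq_cube)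
qed

lemma comp_deriv_has_derivatives:
  fixes f h :: "real \<Rightarrow> real"
  assumes h: "\<And>n. ((deriv ^^ n) h has_real_derivative (deriv ^^ Suc n) h x) (at x)"
    and f: "\<And>n. ((deriv ^^ n) f has_real_derivative (deriv ^^ Suc n) f (h x)) (at (h x))"
  shows "((\<lambda>x. deriv f (h x) * deriv h x) has_real_derivative
      (deriv ^^ 2) f (h x) * (deriv h x)^2 + deriv f (h x) * (deriv ^^ 2) h x) (at x)"
    and "((\<lambda>x. (deriv ^^ 2) f (h x) * (deriv h x)^2 + deriv f (h x) * (deriv ^^ 2) h x)
      has_real_derivative (deriv ^^ 3) f (h x) * deriv h x ^ 3
        + 3 * (deriv ^^ 2) f (h x) * deriv h x * (deriv ^^ 2) h x + deriv f (h x) * (deriv ^^ 3) h x)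
      (at x)"
proof -
  have h': "(h has_real_derivative deriv h x) (at x)"
    "(deriv h has_real_derivative (deriv ^^ 2) h x) (at x)"
    "((deriv ^^ 2) h has_real_derivative (deriv ^^ 3) h x) (at x)"
    using h[of 0] h[of 1] h[of 2] by (simp_all add: numeral_2_eq_2 numeral_3_eq_3)
  have f': "(deriv f has_real_derivative (deriv ^^ 2) f (h x)) (at (h x))"
    "((deriv ^^ 2) f has_real_derivative (deriv ^^ 3) f (h x)) (at (h x))"
    using f[of 1] f[of 2] by (simp_all add: numeral_2_eq_2 numeral_3_eq_3)
  show "((\<lambda>x. deriv f (h x) * deriv h x) has_real_derivative
      (deriv ^^ 2) f (h x) * (deriv h x)^2 + deriv f (h x) * (deriv ^^ 2) h x) (at x)"
    by (rule DERIV_cong[OF DERIV_mult[OF DERIV_chain2[OF f'(1) h'(1)] h'(2)]])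
      (simp add: numeral_2_eq_2 power2_eq_square algebra_simps)
  show "((\<lambda>x. (deriv ^^ 2) f (h x) * (deriv h x)^2 + deriv f (h x) * (deriv ^^ 2) h x)
      has_real_derivative (deriv ^^ 3) f (h x) * deriv h x ^ 3
        + 3 * (deriv ^^ 2) f (h x) * deriv h x * (deriv ^^ 2) h x + deriv f (h x) * (deriv ^^ 3) h x)
      (at x)"
    by (rule DERIV_cong[OF DERIV_add[OF DERIV_mult[OF DERIV_chain2[OF f'(2) h'(1)]
            DERIV_power[OF h'(2), of 2]] DERIV_mult[OF DERIV_chain2[OF f'(1) h'(1)] h'(3)]]])
      (simp add: numeral_2_eq_2 numeral_3_eq_3 power2_eq_square power3_eq_cube algebra_simps)
qed

lemma neg_schwarzian_comp_deriv_no_pos_interior_min: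
  fixes f h :: "real \<Rightarrow> real"
  assumes h_smooth: "\<And>n x. x \<in> {a..b} \<Longrightarrow>
      ((deriv ^^ n) h has_real_derivative (deriv ^^ Suc n) h x) (at x)"
    and f_smooth: "\<And>n x. x \<in> {a..b} \<Longrightarrow>
      ((deriv ^^ n) f has_real_derivative (deriv ^^ Suc n) f (h x)) (at (h x))"
    and c: "a < c" "c < b"
    and h_c: "deriv h c \<noteq> 0" "schwarzian h c < 0"
    and f_hc: "deriv f (h c) \<noteq> 0" "schwarzian f (h c) < 0"
    and pos: "0 < deriv f (h c) * deriv h c"
  shows "\<exists>y\<in>{a..b}. deriv f (h y) * deriv h y < deriv f (h c) * deriv h c"
proof (rule ccontr)
  define F1 where "F1 = (\<lambda>x. deriv f (h x) * deriv h x)"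
  define F2 where "F2 = (\<lambda>x. (deriv ^^ 2) f (h x) * (deriv h x)^2 + deriv f (h x) * (deriv ^^ 2) h x)"
  define F3 where "F3 = (\<lambda>x. (deriv ^^ 3) f (h x) * deriv h x ^ 3
      + 3 * (deriv ^^ 2) f (h x) * deriv h x * (deriv ^^ 2) h x + deriv f (h x) * (deriv ^^ 3) h x)"
  have dF1: "(F1 has_real_derivative F2 x) (at x)" and dF2: "(F2 has_real_derivative F3 x) (at x)"
    if "x \<in> {a..b}" for x
    unfolding F1_def F2_def F3_def
    using comp_deriv_has_derivatives[OF h_smooth[OF that] f_smooth[OF that]] by simp_all
  assume "\<not> (\<exists>y\<in>{a..b}. F1 y < F1 c)"
  then have min: "F1 c \<le> F1 y" if "y \<in> {a..b}" for y
    using that by (simp add: not_less)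
  have "F2 c = 0"
    using c min by (intro DERIV_local_min[OF dF1, where d = "min (c - a) (b - c)"])
      (auto simp: abs_less_iff)
  then have "F3 c = F1 c * (schwarzian f (h c) * (deriv h c)^2 + schwarzian h c)"
    unfolding F1_def F3_def schwarzian_def
    by (intro third_deriv_comp_at_critical_point f_hc h_c) (simp add: F2_def)
  also have "\<dots> < 0"
    using pos f_hc h_c by (simp add: F1_def mult_pos_neg add_neg_neg mult_neg_pos)
  finally obtain y where "y \<in> {c<..b}" "F1 y < F1 c"
    using critical_point_neg_second_deriv_decreases_right[OF c(2) dF1 dF2 \<open>F2 c = 0\<close>] c by auto
  then show False
    using min[of y] c by auto
qed

lemma fixed_points_deriv_eq_1:
  fixes f F :: "real \<Rightarrow> real"
  assumes "a < b" "f a = a" "f b = b"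
    and "\<And>x. x \<in> {a..b} \<Longrightarrow> (f has_real_derivative F x) (at x)"
  obtains \<xi> where "a < \<xi>" "\<xi> < b" "F \<xi> = 1"
proof -
  obtain \<xi> where "a < \<xi>" "\<xi> < b" "f b - f a = (b - a) * F \<xi>"
    using MVT2[OF \<open>a < b\<close>, of f F] assms(4) by auto
  with assms(1-3) show ?thesis
    using that by simp
qed

lemma continuous_on_Icc_obtains_interior_min:
  fixes F :: "real \<Rightarrow> real"
  assumes "continuous_on {a..b} F" "a < \<xi>" "\<xi> < b" "F \<xi> \<le> F a" "F \<xi> \<le> F b"
  obtains c where "a < c" "c < b" "\<And>y. y \<in> {a..b} \<Longrightarrow> F c \<le> F y"
proof -
  obtain m where m: "m \<in> {a..b}" "\<And>y. y \<in> {a..b} \<Longrightarrow> F m \<le> F y"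
    using continuous_attains_inf[OF compact_Icc _ assms(1)] assms(2,3) by auto
  show ?thesis
  proof (cases "m = a \<or> m = b")
    case True
    then have "F \<xi> \<le> F y" if "y \<in> {a..b}" for y
      using assms(4,5) m(2)[OF that] by auto
    then show ?thesis
      using that assms(2,3) by blast
  next
    case False
    then show ?thesis
      using m by (intro that[of m]) auto
  qed
qed

lemma concave_on_above_diagonal:
  fixes g :: "real \<Rightarrow> real"
  assumes "concave_on {p..q} g" "p < g p" "q < g q" "x \<in> {p..q}"
  shows "x < g x"
proof (cases "p = q")
  case True
  then show ?thesis using assms by auto
next
  case False
  then have "p < q" using assms(4) by auto
  define t where "t = (x - p) / (q - p)"
  have t: "0 \<le> t" "t \<le> 1"
    using assms(4) \<open>p < q\<close> by (auto simp: t_def)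
  have "x = p + t * (q - p)"
    using \<open>p < q\<close> by (simp add: t_def)
  also have "\<dots> = (1 - t) * p + t * q"
    by (simp add: algebra_simps)
  finally have x: "x = (1 - t) * p + t * q" .
  have "0 < (1 - t) * (g p - p) + t * (g q - q)"
  proof (cases "t = 0")
    case False
    then show ?thesis
      using t assms(2,3) by (intro add_nonneg_pos) auto
  qed (use assms(2) in simp)
  then have "x < (1 - t) * g p + t * g q"
    unfolding x by (simp add: algebra_simps)
  also have "(1 - t) * g p + t * g q \<le> g ((1 - t) *\<^sub>R p + t *\<^sub>R q)"
    using t \<open>p < q\<close> by (intro concave_onD[OF assms(1)]) auto
  finally show ?thesis
    using x by simp
qed

lemma concave_on_decreasing_beyond_max:
  fixes g :: "real \<Rightarrow> real"
  assumes "concave_on S g" "m \<in> S" "y \<in> S" "g y < g m" "m \<le> x" "x < y"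
  shows "g y < g x"
proof -
  define t where "t = (x - m) / (y - m)"
  have t: "0 \<le> t" "t < 1" "t * (y - m) = x - m"
    using assms(5,6) by (auto simp: t_def field_simps)
  have "(1 - t) * g m + t * g y \<le> g ((1 - t) *\<^sub>R m + t *\<^sub>R y)"
    using t assms(2,3) by (intro concave_onD[OF assms(1)]) auto
  also have "(1 - t) *\<^sub>R m + t *\<^sub>R y = x"
    using t(3) by (simp add: algebra_simps)
  finally have "g y + (1 - t) * (g m - g y) \<le> g x"
    by (simp add: algebra_simps)
  moreover have "0 < (1 - t) * (g m - g y)"
    using t assms(4) by simp
  ultimately show ?thesis
    by linarith
qed

lemma concave_on_deriv_neg_beyond_max:
  fixes g :: "real \<Rightarrow> real"
  assumes "concave_on {p..q} g" "m \<in> {p..q}" "m < x" "x < q" "g x < g m"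
    and der: "(g has_real_derivative D) (at x)"
  shows "D < 0"
proof -
  have "convex_on {p..q} (\<lambda>x. - g x)"
    using assms(1) by (simp add: concave_on_def)
  moreover have "((\<lambda>x. - g x) has_real_derivative - D) (at x within {p..q})"
    using DERIV_minus[OF der] by (simp add: has_field_derivative_at_within)
  ultimately have "- g m - (- g x) \<ge> - D * (m - x)"
    using assms(2-4) by (intro convex_on_imp_above_tangent) auto
  then have "D * (x - m) < 0"
    using assms(5) by (simp add: algebra_simps)
  then show ?thesis
    using assms(3) by (simp add: mult_less_0_iff)
qed

locale feigenbaum_fixed_point =
  fixes lam :: real and g :: "real \<Rightarrow> real" and c1 :: real
  assumes lam_gt_1: "1 < lam"
    and smooth: "\<And>n x. x \<in> {-1..1} \<Longrightarrow>
      ((deriv ^^ n) g has_real_derivative (deriv ^^ Suc n) g x) (at x)"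
    and maps_into: "\<And>x. x \<in> {-1..1} \<Longrightarrow> g x \<in> {-1..1}"
    and renorm: "\<And>x. x \<in> {-1..1} \<Longrightarrow> g x = - lam * g (g (- x / lam))"
    and fixed_m1: "g (-1) = -1"
    and fixed_m1_unique: "\<And>x. x \<in> {-1..1} \<Longrightarrow> g x = x \<Longrightarrow> deriv g x > 0 \<Longrightarrow> x = -1"
    and g_0: "g 0 = c1"
    and strict_max_0: "\<And>x. x \<in> {-1..1} \<Longrightarrow> x \<noteq> 0 \<Longrightarrow> g x < c1"
    and even: "\<And>x. x \<in> {-1..1} \<Longrightarrow> g (- x) = g x"
    and concave: "concave_on {-c1..c1} g"
    and g_c1: "g c1 = - c1 / lam"
    and deriv_c1: "deriv g c1 = - lam"
    and neg_schwarzian: "\<And>x. x \<in> {-1..1} \<Longrightarrow> deriv g x \<noteq> 0 \<Longrightarrow> schwarzian g x < 0"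
begin

lemma has_deriv: "x \<in> {-1..1} \<Longrightarrow> (g has_real_derivative deriv g x) (at x)"
  using smooth[of x 0] by simp

lemma le_c1: "x \<in> {-1..1} \<Longrightarrow> g x \<le> c1"
  using strict_max_0 g_0 by (cases "x = 0") (auto intro: less_imp_le)

lemma c1_in: "c1 \<in> {-1..1}"
  using maps_into[of 0] g_0 by simp

lemma deriv_0: "deriv g 0 = 0"
  using le_c1 g_0 by (intro DERIV_local_max[OF has_deriv, where d = 1]) (auto simp: abs_less_iff)

lemma c1_pos: "0 < c1"
proof (rule ccontr)
  assume "\<not> 0 < c1"
  then have "0 \<le> - c1 / lam"
    using lam_gt_1 by (simp add: divide_nonpos_pos)
  then have "c1 = 0"
    using le_c1[OF c1_in] g_c1 \<open>\<not> 0 < c1\<close> by linarith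
  then show False
    using deriv_c1 deriv_0 lam_gt_1 by simp
qed

lemma above_diagonal:
  assumes "x \<in> {-c1..0}"
  shows "x < g x"
proof (rule concave_on_above_diagonal[OF _ _ _ assms])
  show "concave_on {-c1..0} g"
    using concave convex_on_subset[of "{-c1..c1}" "\<lambda>x. - g x" "{-c1..0}"] c1_pos
    by (auto simp: concave_on_def)
  have "c1 / lam < c1"
    using c1_pos lam_gt_1 by (simp add: divide_less_eq)
  then show "- c1 < g (- c1)"
    using even[OF c1_in] g_c1 by simp
  show "0 < g 0"
    using g_0 c1_pos by simp
qed

lemma c1_lt_1: "c1 < 1"
  using above_diagonal[of "-1"] c1_in fixed_m1 by force

lemma fixed_point_below_neg_c1_deriv_ge_1:
  assumes "-1 \<le> p" "p < -c1" "g p = p"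
  shows "1 \<le> deriv g p"
proof (rule ccontr)
  assume "\<not> 1 \<le> deriv g p"
  have "-c1 < g (-c1)"
    using above_diagonal[of "-c1"] c1_pos by simp
  obtain z where z: "p < z" "z < -c1" "g z - z = 0" "deriv g z - 1 \<ge> 0"
    by (rule exists_zero_with_nonneg_deriv[where p = p and r = "-c1" and h = "\<lambda>x. g x - x"
          and h' = "\<lambda>x. deriv g x - 1"])
      (use assms c1_pos \<open>-c1 < g (-c1)\<close> \<open>\<not> 1 \<le> deriv g p\<close>
        in \<open>auto intro!: derivative_eq_intros has_deriv\<close>)
  then show False
    using fixed_m1_unique[of z] assms c1_pos by auto
qed

lemma deriv_m1_ge_1: "1 \<le> deriv g (-1)"
  using fixed_point_below_neg_c1_deriv_ge_1 c1_lt_1 fixed_m1 by simp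

lemma decreasing:
  assumes "0 \<le> x" "x < y" "y \<le> c1"
  shows "g y < g x"
proof (rule concave_on_decreasing_beyond_max[where m = 0, OF concave _ _ _ assms(1,2)])
  show "0 \<in> {-c1..c1}" "y \<in> {-c1..c1}"
    using assms c1_pos by auto
  show "g y < g 0"
    using strict_max_0[of y] g_0 assms c1_lt_1 by simp
qed

lemma deriv_neg:
  assumes "0 < x" "x \<le> c1"
  shows "deriv g x < 0"
proof (cases "x = c1")
  case True
  then show ?thesis using deriv_c1 lam_gt_1 by simp
next
  case False
  show ?thesis
  proof (rule concave_on_deriv_neg_beyond_max[where m = 0, OF concave _ _ _ _ has_deriv])
    show "0 \<in> {-c1..c1}" "0 < x" "x < c1" "x \<in> {-1..1}"
      using assms False c1_pos c1_lt_1 by auto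
    show "g x < g 0"
      using strict_max_0[of x] g_0 assms c1_lt_1 by simp
  qed
qed

lemma deriv_renorm:
  assumes x: "x \<in> {-1..1}"
  shows "deriv g x = deriv g (g (- x / lam)) * deriv g (- x / lam)"
proof -
  have y: "- x / lam \<in> {-1..1}"
    using x lam_gt_1 by (auto simp: field_simps)
  have "((\<lambda>t. g (- t / lam)) has_real_derivative deriv g (- x / lam) * (- 1 / lam)) (at x)"
    by (rule DERIV_chain2[where f = g and g = "\<lambda>t. - t / lam", OF has_deriv[OF y]])
      (use lam_gt_1 in \<open>auto intro!: derivative_eq_intros\<close>)
  from DERIV_cmult[OF DERIV_chain2[where f = g and g = "\<lambda>t. g (- t / lam)",
        OF has_deriv[OF maps_into[OF y]] this], of "- lam"]
  have R: "((\<lambda>t. - lam * g (g (- t / lam))) has_real_derivative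
      deriv g (g (- x / lam)) * deriv g (- x / lam)) (at x)"
    using lam_gt_1 by simp
  show ?thesis
    by (rule has_real_derivative_unique_on_Icc[where a = "-1" and b = 1, OF _ x has_deriv[OF x] R])
      (use renorm in auto)
qed

lemma fixed_point_neg_multiplier_pos:
  assumes "q \<in> {-1..1}" "g q = q" "deriv g q < 0"
  shows "0 < q"
proof (rule ccontr)
  assume "\<not> 0 < q"
  then have "q < -c1"
    using above_diagonal[of q] assms(2) by force
  moreover have "q \<noteq> -1"
    using assms fixed_m1 deriv_m1_ge_1 by auto
  ultimately show False
    using fixed_point_below_neg_c1_deriv_ge_1[of q] assms by auto
qed

lemma g_g_inverse_lam: "g (g (1 / lam)) = 1 / lam"
  using renorm[of "-1"] fixed_m1 lam_gt_1 by (simp add: field_simps)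

lemma cycle_interval_invariant:
  assumes x: "x \<in> {1 / lam..g (1 / lam)}"
  shows "0 < x" "x \<le> c1" "g x \<in> {1 / lam..g (1 / lam)}"
proof -
  have "0 < lam"
    using lam_gt_1 by simp
  then have "0 < 1 / lam" "1 / lam \<in> {-1..1}"
    using lam_gt_1 by (simp_all add: field_simps)
  moreover from this(2) have "g (1 / lam) \<le> c1"
    by (rule le_c1)
  ultimately have x_bounds: "0 < x" "x \<le> c1"
    using x unfolding atLeastAtMost_iff by linarith+
  then show "0 < x" "x \<le> c1"
    by simp_all
  have "g (g (1 / lam)) \<le> g x"
    using decreasing[of x "g (1 / lam)"] x x_bounds \<open>g (1 / lam) \<le> c1\<close>
    by (cases "x = g (1 / lam)") auto
  moreover have "g x \<le> g (1 / lam)"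
    using decreasing[of "1 / lam" x] x x_bounds \<open>0 < 1 / lam\<close>
    by (cases "x = 1 / lam") auto
  ultimately show "g x \<in> {1 / lam..g (1 / lam)}"
    using g_g_inverse_lam by simp
qed

lemma continuous_on_deriv_gg:
  assumes "S \<subseteq> {-1..1}" "g ` S \<subseteq> {-1..1}"
  shows "continuous_on S (\<lambda>x. deriv g (g x) * deriv g x)"
proof -
  have "isCont (deriv g) y" if "y \<in> {-1..1}" for y
    using DERIV_isCont[OF smooth[OF that, of 1]] by simp
  then show ?thesis
    using assms by (intro continuous_at_imp_continuous_on ballI isCont_mult
        isCont_o2[OF DERIV_isCont[OF has_deriv]]) auto
qed

lemma deriv_gg_no_pos_interior_min:
  assumes dom: "{a..b} \<subseteq> {-1..1}" "g ` {a..b} \<subseteq> {-1..1}"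
    and "a < c" "c < b" "0 < deriv g (g c) * deriv g c"
  shows "\<exists>y\<in>{a..b}. deriv g (g y) * deriv g y < deriv g (g c) * deriv g c"
proof (rule neg_schwarzian_comp_deriv_no_pos_interior_min[where f = g and h = g,
      OF _ _ assms(3,4) _ _ _ _ assms(5)])
  show "((deriv ^^ n) g has_real_derivative (deriv ^^ Suc n) g x) (at x)"
    "((deriv ^^ n) g has_real_derivative (deriv ^^ Suc n) g (g x)) (at (g x))"
    if "x \<in> {a..b}" for n x
  proof -
    have "x \<in> {-1..1}" "g x \<in> {-1..1}"
      using dom that by blast+
    then show "((deriv ^^ n) g has_real_derivative (deriv ^^ Suc n) g x) (at x)"
      "((deriv ^^ n) g has_real_derivative (deriv ^^ Suc n) g (g x)) (at (g x))"
      using smooth by blast+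
  qed
  have "c \<in> {a..b}"
    using assms(3,4) by simp
  then have "c \<in> {-1..1}" "g c \<in> {-1..1}"
    using dom by blast+
  show "deriv g c \<noteq> 0" "deriv g (g c) \<noteq> 0"
    using assms(5) by auto
  then show "schwarzian g c < 0" "schwarzian g (g c) < 0"
    using neg_schwarzian \<open>c \<in> {-1..1}\<close> \<open>g c \<in> {-1..1}\<close> by blast+
qed

lemma fixed_point_neg_multiplier_le_inverse_lam:
  assumes q: "q \<in> {-1..1}" "g q = q" "deriv g q < 0"
  shows "q \<le> 1 / lam"
proof (rule ccontr)
  define a where "a = 1 / lam"
  define F where "F = (\<lambda>x. deriv g (g x) * deriv g x)"
  assume "\<not> q \<le> 1 / lam"
  then have "a < q"
    by (simp add: a_def)
  have "q < g a"
    using decreasing[of a q] \<open>a < q\<close> le_c1[OF q(1)] q(2) lam_gt_1 by (simp add: a_def)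
  note cycle = cycle_interval_invariant[folded a_def]
  have dom: "{a..g a} \<subseteq> {-1..1}" "g ` {a..g a} \<subseteq> {-1..1}"
    using cycle cycle[OF cycle(3)] c1_lt_1 by fastforce+
  have "F a = deriv g (-1)" "F (g a) = deriv g (-1)"
    using deriv_renorm[of "-1"] g_g_inverse_lam by (simp_all add: F_def a_def)
  moreover obtain \<xi> where "a < \<xi>" "\<xi> < q" "F \<xi> = 1"
  proof (rule fixed_points_deriv_eq_1[OF \<open>a < q\<close>, where f = "\<lambda>x. g (g x)"])
    show "g (g a) = a" "g (g q) = q"
      using g_g_inverse_lam q(2) by (simp_all add: a_def)
    show "((\<lambda>x. g (g x)) has_real_derivative F x) (at x)" if "x \<in> {a..q}" for x
    proof -
      have "x \<in> {a..g a}"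
        using that \<open>q < g a\<close> by auto
      then have "x \<in> {-1..1}" "g x \<in> {-1..1}"
        using dom by blast+
      from DERIV_chain2[OF has_deriv[OF this(2)] has_deriv[OF this(1)]] show ?thesis
        unfolding F_def by simp
    qed
  qed
  moreover have "continuous_on {a..g a} F"
    unfolding F_def using dom by (rule continuous_on_deriv_gg)
  ultimately obtain c where c: "a < c" "c < g a" "\<And>y. y \<in> {a..g a} \<Longrightarrow> F c \<le> F y"
    using continuous_on_Icc_obtains_interior_min[of a "g a" F \<xi>] \<open>q < g a\<close> deriv_m1_ge_1 by auto
  moreover have "0 < F c"
    using deriv_neg cycle[of c] cycle[OF cycle(3), of c] c by (simp add: F_def mult_neg_neg)
  ultimately show False
    using deriv_gg_no_pos_interior_min[OF dom, of c] unfolding F_def by force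
qed

theorem deriv_m1_eq_square_deriv_fixed_point:
  assumes q: "q \<in> {-1..1}" "g q = q" "deriv g q < 0"
  shows "deriv g (-1) = (deriv g q)^2"
proof -
  define x0 where "x0 = - (lam * q)"
  have "0 < q" "q \<le> 1 / lam"
    using fixed_point_neg_multiplier_pos fixed_point_neg_multiplier_le_inverse_lam q by auto
  moreover have "0 < lam * q" "lam * q \<le> 1"
    using \<open>0 < q\<close> \<open>q \<le> 1 / lam\<close> lam_gt_1 by (simp_all add: field_simps)
  ultimately have x0: "x0 \<in> {-1..1}"
    unfolding x0_def atLeastAtMost_iff by linarith
  have x0_q: "- x0 / lam = q"
    using lam_gt_1 by (simp add: x0_def)
  have "g x0 = x0"
    using renorm[OF x0] x0_q q(2) by (simp add: x0_def)
  moreover have "deriv g x0 = (deriv g q)^2"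
    using deriv_renorm[OF x0] x0_q q(2) by (simp add: power2_eq_square)
  ultimately show ?thesis
    using fixed_m1_unique[OF x0] q(3) by fastforce
qed

end

theorem mainTheorem6:
  fixes lam :: real and g :: "real \<Rightarrow> real" and c0 c1 q0 :: real
  assumes lam_range: "2.5029 \<le> lam" "lam < 2.503"
    and analytic: "real_analytic_near {-1..1} g"
    and maps_into: "\<forall>x\<in>{-1..1}. g x \<in> {-1..1}"
    and renorm: "\<forall>x\<in>{-1..1}. g x = - lam * g (g (- x / lam))"
    and fix_m1: "g (-1) = -1" "deriv g (-1) > 0"
    and fix_m1_unique: "\<forall>x\<in>{-1..1}. g x = x \<and> deriv g x > 0 \<longrightarrow> x = -1"
    and g_1: "g 1 = -1"
    and c0_int: "-1 < c0" "c0 < 1"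
    and c0_crit: "deriv g c0 = 0" "(deriv ^^ 2) g c0 \<noteq> 0"
    and c0_max: "\<forall>x\<in>{-1..1}. x \<noteq> c0 \<longrightarrow> g x < g c0"
    and even: "\<forall>x\<in>{-1..1}. g (- x) = g x"
    and c1_def: "c1 = g c0"
    and concave: "concave_on {-c1..c1} g"
    and c1_props: "g c1 = - c1 / lam" "deriv g c1 = - lam"
    and neg_schwarzian: "\<forall>x\<in>{-1..1}. deriv g x \<noteq> 0 \<longrightarrow> schwarzian g x < 0"
    and q0_fix: "q0 \<in> {-1..1}" "g q0 = q0" "deriv g q0 < 0"
  shows "deriv g (-1) = (deriv g q0)^2"
proof -
  have "c0 = 0"
    using c0_max[rule_format, of "- c0"] even c0_int by force
  interpret feigenbaum_fixed_point lam g c1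
  proof
    show "1 < lam"
      using lam_range by simp
    show "((deriv ^^ n) g has_real_derivative (deriv ^^ Suc n) g x) (at x)" if "x \<in> {-1..1}" for n x
      by (rule real_analytic_near_has_higher_derivative[OF analytic that])
    show "g 0 = c1" "g (-1) = -1" "concave_on {-c1..c1} g" "g c1 = - c1 / lam" "deriv g c1 = - lam"
      using c1_def \<open>c0 = 0\<close> fix_m1 concave c1_props by simp_all
    fix x :: real assume x: "x \<in> {-1..1}"
    show "g x \<in> {-1..1}" "g x = - lam * g (g (- x / lam))" "g (- x) = g x"
      using maps_into renorm even x by blast+
    show "g x = x \<Longrightarrow> deriv g x > 0 \<Longrightarrow> x = -1"
      using fix_m1_unique x by blast
    show "x \<noteq> 0 \<Longrightarrow> g x < c1"
      using c0_max x c1_def \<open>c0 = 0\<close> by blast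
    show "deriv g x \<noteq> 0 \<Longrightarrow> schwarzian g x < 0"
      using neg_schwarzian x by blast
  qed
  show ?thesis
    using deriv_m1_eq_square_deriv_fixed_point q0_fix by blast
qed

end
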